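(* Let $\mathbb{P}_3=\mathbb{Z}^{6}\oplus\mathbb{F}_2^{11}$, whose elements are written $\overline{\alpha}=(\alpha_1,\dots,\alpha_6;\ \alpha^1_{12},\alpha^1_{13},\alpha^1_{23};\ \alpha^2_{12},\alpha^2_{13},\alpha^2_{23};\ \alpha^3_{12},\alpha^3_{13},\alpha^3_{23};\ \alpha^1_{123},\alpha^2_{123})$ with $\alpha_1,\dots,\alpha_6\in\mathbb{Z}$ and the remaining eleven coordinates in $\mathbb{F}_2=\{0,1\}$. Define a product $\overline{\alpha}\cdot\overline{\beta}=\overline{\gamma}$ by $\gamma_l=\alpha_l+\beta_l$ for $l=1,\dots,6$, and, computing modulo $2$ (integers being reduced mod 2): $\gamma^1_{ij}=\alpha^1_{ij}+\beta^1_{ij}+\alpha_j\beta_i$, $\gamma^2_{ij}=\alpha^2_{ij}+\beta^2_{ij}+\alpha_{j+3}\beta_{i+3}$, $\gamma^3_{ij}=\alpha^3_{ij}+\beta^3_{ij}+\alpha_{i+3}\beta_j+\alpha_{j+3}\beta_i$ for $1\le i<j\le 3$; $\gamma^1_{123}=\alpha^1_{123}+\beta^1_{123}+\alpha^3_{12}\beta_3+\alpha^3_{13}\beta_2+\alpha^3_{23}\beta_1+\alpha_4\beta_2\beta_3+\alpha_5\beta_1\beta_3+\alpha_6\beta_1\beta_2$; $\gamma^2_{123}=\alpha^2_{123}+\beta^2_{123}+\alpha^3_{12}\beta_6+\alpha^3_{13}\beta_5+\alpha^3_{23}\beta_4+\alpha_4\alpha_5\beta_3+\alpha_4\alpha_6\beta_2+\alpha_5\alpha_6\beta_1+\alpha_4(\beta_2\beta_6+\beta_5\beta_3)+\alpha_5(\beta_1\beta_6+\beta_4\beta_3)+\alpha_6(\beta_1\beta_5+\beta_4\beta_2)$.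 Then $\mathbb{P}_3$ with this product is a group. *)

theory Defs
  imports "HOL-Algebra.Group" "HOL-Library.Z2"
begin

text \<open>Field names: x1..x6 = alpha_1..alpha_6; c1_ij, c2_ij, c3_ij = alpha^1_ij, alpha^2_ij, alpha^3_ij;
  t1, t2 = alpha^1_123, alpha^2_123.\<close>

record P3 =
  x1 :: int  x2 :: int  x3 :: int  x4 :: int  x5 :: int  x6 :: int
  c1_12 :: bit  c1_13 :: bit  c1_23 :: bit
  c2_12 :: bit  c2_13 :: bit  c2_23 :: bit
  c3_12 :: bit  c3_13 :: bit  c3_23 :: bit
  t1 :: bit  t2 :: bit

abbreviation m2 :: "int \<Rightarrow> bit" where "m2 \<equiv> of_int"

definition P3_mult :: "P3 \<Rightarrow> P3 \<Rightarrow> P3" where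
  "P3_mult a b = \<lparr>
     x1 = x1 a + x1 b, x2 = x2 a + x2 b, x3 = x3 a + x3 b,
     x4 = x4 a + x4 b, x5 = x5 a + x5 b, x6 = x6 a + x6 b,
     c1_12 = c1_12 a + c1_12 b + m2 (x2 a) * m2 (x1 b),
     c1_13 = c1_13 a + c1_13 b + m2 (x3 a) * m2 (x1 b),
     c1_23 = c1_23 a + c1_23 b + m2 (x3 a) * m2 (x2 b),
     c2_12 = c2_12 a + c2_12 b + m2 (x5 a) * m2 (x4 b),
     c2_13 = c2_13 a + c2_13 b + m2 (x6 a) * m2 (x4 b),
     c2_23 = c2_23 a + c2_23 b + m2 (x6 a) * m2 (x5 b),
     c3_12 = c3_12 a + c3_12 b + m2 (x4 a) * m2 (x2 b) + m2 (x5 a) * m2 (x1 b),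
     c3_13 = c3_13 a + c3_13 b + m2 (x4 a) * m2 (x3 b) + m2 (x6 a) * m2 (x1 b),
     c3_23 = c3_23 a + c3_23 b + m2 (x5 a) * m2 (x3 b) + m2 (x6 a) * m2 (x2 b),
     t1 = t1 a + t1 b + c3_12 a * m2 (x3 b) + c3_13 a * m2 (x2 b) + c3_23 a * m2 (x1 b)
          + m2 (x4 a) * m2 (x2 b) * m2 (x3 b) + m2 (x5 a) * m2 (x1 b) * m2 (x3 b)
          + m2 (x6 a) * m2 (x1 b) * m2 (x2 b),
     t2 = t2 a + t2 b + c3_12 a * m2 (x6 b) + c3_13 a * m2 (x5 b) + c3_23 a * m2 (x4 b)
          + m2 (x4 a) * m2 (x5 a) * m2 (x3 b) + m2 (x4 a) * m2 (x6 a) * m2 (x2 b)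
          + m2 (x5 a) * m2 (x6 a) * m2 (x1 b)
          + m2 (x4 a) * (m2 (x2 b) * m2 (x6 b) + m2 (x5 b) * m2 (x3 b))
          + m2 (x5 a) * (m2 (x1 b) * m2 (x6 b) + m2 (x4 b) * m2 (x3 b))
          + m2 (x6 a) * (m2 (x1 b) * m2 (x5 b) + m2 (x4 b) * m2 (x2 b)) \<rparr>"

end

theory Submission
  imports Defs
begin

text \<open>The integer coordinates simply add, and every \<open>F\<^sub>2\<close> coordinate of a product is the sum of
  the corresponding coordinates of the factors plus a polynomial in coordinates of lower level.
  Associativity therefore reduces, coordinate by coordinate, to polynomial identities in the
  Boolean ring \<open>F\<^sub>2\<close> (where \<open>x + x = 0\<close> and \<open>x * x = x\<close>), which normalisation decides. The same
  triangular shape lets the equation \<open>b \<cdot> a = 1\<close> be solved for \<open>b\<close> level by level: first the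
  integer coordinates, then the quadratic ones, then \<open>t1, t2\<close>.\<close>

lemma bit_add_self: "(x::bit) + x = 0"
  by (cases x) auto

lemma bit_add_self_left: "(x::bit) + (x + y) = y"
  by (cases x) auto

lemma bit_mult_self: "(x::bit) * x = x"
  by (cases x) auto

lemma bit_mult_self_left: "(x::bit) * (x * y) = x * y"
  by (cases x) auto

lemmas bit_boolean_ring_simps =
  bit_add_self bit_add_self_left bit_mult_self bit_mult_self_left

text \<open>Keep sums and products of bits as ring operations, so that \<open>algebra_simps\<close> can normalise
  them, instead of rewriting them to \<open>XOR\<close> and \<open>AND\<close>.\<close>
declare add_bit_eq_xor [simp del] mult_bit_eq_and [simp del]

definition P3_one :: P3 where
  "P3_one = \<lparr>x1 = 0, x2 = 0, x3 = 0, x4 = 0, x5 = 0, x6 = 0,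
     c1_12 = 0, c1_13 = 0, c1_23 = 0, c2_12 = 0, c2_13 = 0, c2_23 = 0,
     c3_12 = 0, c3_13 = 0, c3_23 = 0, t1 = 0, t2 = 0\<rparr>"

definition P3_inv :: "P3 \<Rightarrow> P3" where
  "P3_inv a = (let
     d12 = c3_12 a + m2 (x4 a) * m2 (x2 a) + m2 (x5 a) * m2 (x1 a);
     d13 = c3_13 a + m2 (x4 a) * m2 (x3 a) + m2 (x6 a) * m2 (x1 a);
     d23 = c3_23 a + m2 (x5 a) * m2 (x3 a) + m2 (x6 a) * m2 (x2 a)
   in \<lparr>x1 = - x1 a, x2 = - x2 a, x3 = - x3 a, x4 = - x4 a, x5 = - x5 a, x6 = - x6 a,
     c1_12 = c1_12 a + m2 (x2 a) * m2 (x1 a),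
     c1_13 = c1_13 a + m2 (x3 a) * m2 (x1 a),
     c1_23 = c1_23 a + m2 (x3 a) * m2 (x2 a),
     c2_12 = c2_12 a + m2 (x5 a) * m2 (x4 a),
     c2_13 = c2_13 a + m2 (x6 a) * m2 (x4 a),
     c2_23 = c2_23 a + m2 (x6 a) * m2 (x5 a),
     c3_12 = d12, c3_13 = d13, c3_23 = d23,
     t1 = t1 a + d12 * m2 (x3 a) + d13 * m2 (x2 a) + d23 * m2 (x1 a)
          + m2 (x4 a) * m2 (x2 a) * m2 (x3 a) + m2 (x5 a) * m2 (x1 a) * m2 (x3 a)
          + m2 (x6 a) * m2 (x1 a) * m2 (x2 a),
     t2 = t2 a + d12 * m2 (x6 a) + d13 * m2 (x5 a) + d23 * m2 (x4 a)
          + m2 (x4 a) * m2 (x5 a) * m2 (x3 a) + m2 (x4 a) * m2 (x6 a) * m2 (x2 a)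
          + m2 (x5 a) * m2 (x6 a) * m2 (x1 a)
          + m2 (x4 a) * (m2 (x2 a) * m2 (x6 a) + m2 (x5 a) * m2 (x3 a))
          + m2 (x5 a) * (m2 (x1 a) * m2 (x6 a) + m2 (x4 a) * m2 (x3 a))
          + m2 (x6 a) * (m2 (x1 a) * m2 (x5 a) + m2 (x4 a) * m2 (x2 a))\<rparr>)"

lemma P3_mult_assoc: "P3_mult (P3_mult a b) c = P3_mult a (P3_mult b c)"
  by (simp add: P3_mult_def algebra_simps bit_boolean_ring_simps)

lemma P3_mult_one_left: "P3_mult P3_one a = a"
  by (simp add: P3_mult_def P3_one_def)

lemma P3_mult_inv_left: "P3_mult (P3_inv a) a = P3_one"
  by (simp add: P3_mult_def P3_one_def P3_inv_def Let_def algebra_simps bit_boolean_ring_simps)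

lemma group_P3: "group \<lparr>carrier = UNIV, mult = P3_mult, one = P3_one\<rparr>"
  by (rule groupI) (auto simp: P3_mult_assoc P3_mult_one_left intro: P3_mult_inv_left)

theorem lemma2p4:
  shows "\<exists>e. group \<lparr>carrier = (UNIV :: P3 set), mult = P3_mult, one = e\<rparr>"
  using group_P3 by blast

end
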